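(* There exists a constant $C>0$ such that if $\omega\in L^1(\Pi)\cap L^2(\Pi)$ is non-negative and Steiner symmetric in the $x_1$-variable (i.e. $\omega(x_1,x_2)=\omega(-x_1,x_2)$ and $x_1\mapsto\omega(x_1,x_2)$ is non-increasing for $x_1>0$), then $$\mathcal G\omega(x)\le C\Big(|x_1|^{-3/8}\|\omega\|_1^{1/2}\|\omega\|_2^{1/2}+e^{-\sqrt{|x_1|}/2}\|\omega\|_1\Big)$$ for every $x=(x_1,x_2)\in\Pi$ with $|x_1|>4$.
   Context: Let $\Pi=\{x=(x_1,x_2)\in\mathbb R^2: x_2>0\}$ and for $x=(x_1,x_2)$ write $\bar x=(x_1,-x_2)$. Let $G(x,y)=\frac{1}{2\pi}K_0(|x-y|)$ be the fundamental solution of $-\Delta+\mathrm{Id}$ on $\mathbb R^2$ ($K_0$ the modified Bessel function of the second kind of order zero). Set $G_\Pi(x,y)=G(x,y)-G(\bar x,y)$ for $x,y\in\Pi$ and $\mathcal G\omega(x)=\int_\Pi G_\Pi(x,y)\omega(y)\,dy$. $\|\cdot\|_p$ denotes the $L^p(\Pi)$ norm. *)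

theory Defs
  imports "HOL-Analysis.Analysis"
begin

definition besselK0 :: "real \<Rightarrow> real" where
  "besselK0 r = (LINT t:{0..}|lborel. exp (- (r * cosh t)))"

definition upper_half :: "(real \<times> real) set" where
  "upper_half = {x. snd x > 0}"

definition reflect :: "real \<times> real \<Rightarrow> real \<times> real" where
  "reflect x = (fst x, - snd x)"

text \<open>Fundamental solution of -Delta + Id on R^2.\<close>
definition Gfund :: "real \<times> real \<Rightarrow> real \<times> real \<Rightarrow> real" where
  "Gfund x y = besselK0 (norm (x - y)) / (2 * pi)"

definition G_half :: "real \<times> real \<Rightarrow> real \<times> real \<Rightarrow> real" where
  "G_half x y = Gfund x y - Gfund (reflect x) y"

definition G_op :: "(real \<times> real \<Rightarrow> real) \<Rightarrow> real \<times> real \<Rightarrow> real" where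
  "G_op \<omega> x = (LINT y:upper_half|lborel. G_half x y * \<omega> y)"

definition Lnorm1 :: "(real \<times> real \<Rightarrow> real) \<Rightarrow> real" where
  "Lnorm1 \<omega> = (LINT y:upper_half|lborel. \<bar>\<omega> y\<bar>)"

definition Lnorm2 :: "(real \<times> real \<Rightarrow> real) \<Rightarrow> real" where
  "Lnorm2 \<omega> = sqrt (LINT y:upper_half|lborel. (\<omega> y)\<^sup>2)"

end

theory Submission
  imports Defs "HOL-Probability.Distributions"
begin

text \<open>Since the reflected term is nonnegative, \<open>G\<^sub>\<Pi>(x,y) \<le> K\<^sub>0(|x - y|)\<close>. Where
  \<open>|y\<^sub>1| < |x\<^sub>1|/2\<close> we have \<open>|x - y| > |x\<^sub>1|/2\<close> and \<open>K\<^sub>0\<close> is exponentially small.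
  Where \<open>|y\<^sub>1| \<ge> |x\<^sub>1|/2\<close>, Steiner symmetry gives
  \<open>\<omega>(y\<^sub>1,y\<^sub>2) \<le> (2/|x\<^sub>1|) \<integral>\<^sub>0\<^sup>\<infinity> \<omega>(s,y\<^sub>2) ds\<close>, and likewise for \<open>\<omega>\<^sup>2\<close>, while
  \<open>K\<^sub>0(|x - y|) \<le> exp(-|y\<^sub>2 - x\<^sub>2|/2) K\<^sub>0(|y\<^sub>1 - x\<^sub>1|/2)\<close> and the last factor has
  integral at most 8 in \<open>y\<^sub>1\<close>. By Tonelli the near region therefore contributes at most
  \<open>16 \<parallel>\<omega>\<parallel>\<^sub>1 / |x\<^sub>1|\<close> and, after AM-GM with a free parameter \<open>\<lambda>\<close>, also at most
  \<open>8 \<lambda> \<parallel>\<omega>\<parallel>\<^sub>2\<^sup>2 / |x\<^sub>1| + 8 / \<lambda>\<close>. Optimising \<open>\<lambda>\<close> and taking the geometric mean of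
  the two bounds gives \<open>16 |x\<^sub>1|\<^sup>-\<^sup>3\<^sup>/\<^sup>4 (\<parallel>\<omega>\<parallel>\<^sub>1 \<parallel>\<omega>\<parallel>\<^sub>2)\<^sup>1\<^sup>/\<^sup>2\<close>.\<close>

lemma upper_half_sets[measurable]: "upper_half \<in> sets borel"
  unfolding upper_half_def by (intro borel_open open_Collect_less continuous_intros)

lemma borel_measurable_cosh[measurable]: "(cosh :: real \<Rightarrow> real) \<in> borel_measurable borel"
  by (intro borel_measurable_continuous_onI continuous_intros)

lemma borel_measurable_fst[measurable]:
  "(fst :: 'a::topological_space \<times> 'b::topological_space \<Rightarrow> 'a) \<in> borel_measurable borel"
  by (intro borel_measurable_continuous_onI continuous_intros)

lemma borel_measurable_snd[measurable]:
  "(snd :: 'a::topological_space \<times> 'b::topological_space \<Rightarrow> 'b) \<in> borel_measurable borel"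
  by (intro borel_measurable_continuous_onI continuous_intros)

lemma exp_half_le_cosh: "exp t / 2 \<le> cosh (t :: real)"
  by (simp add: cosh_field_def divide_right_mono)

lemma abs_fst_diff_le_norm: "\<bar>fst x - fst y\<bar> \<le> norm (x - y :: real \<times> real)"
  using norm_fst_le[of "fst (x - y)" "snd (x - y)"] unfolding prod.collapse by simp

lemma abs_snd_diff_le_norm: "\<bar>snd x - snd y\<bar> \<le> norm (x - y :: real \<times> real)"
  using norm_snd_le[of "snd (x - y)" "fst (x - y)"] unfolding prod.collapse by simp

section \<open>The Bessel function \<open>K\<^sub>0\<close>\<close>

text \<open>Unlike \<open>besselK0\<close>, this is \<open>\<infinity>\<close> rather than junk for \<open>r \<le> 0\<close>, and Tonelli applies
  to it without integrability side conditions.\<close>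
definition besselK0_ennreal :: "real \<Rightarrow> ennreal" where
  "besselK0_ennreal r = (\<integral>\<^sup>+ t. ennreal (exp (- (r * cosh t))) * indicator {0..} t \<partial>lborel)"

lemma borel_measurable_besselK0_ennreal[measurable]: "besselK0_ennreal \<in> borel_measurable borel"
proof -
  have "(\<lambda>(r, t). ennreal (exp (- (r * cosh t))) * indicator {0..} t)
      \<in> borel_measurable (borel \<Otimes>\<^sub>M lborel)"
    by simp measurable
  then show ?thesis
    unfolding besselK0_ennreal_def by (rule lborel.borel_measurable_nn_integral)
qed

lemma besselK0_nonneg: "0 \<le> besselK0 r"
  unfolding besselK0_def set_lebesgue_integral_def
  by (intro integral_nonneg_AE) (auto simp: indicator_def)

lemma besselK0_le_besselK0_ennreal: "ennreal (besselK0 r) \<le> besselK0_ennreal r"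
proof -
  have "besselK0 r = integral\<^sup>L lborel (\<lambda>t. indicator {0..} t * exp (- (r * cosh t)))"
    unfolding besselK0_def set_lebesgue_integral_def by simp
  also have "\<dots> = enn2real (\<integral>\<^sup>+ t. ennreal (indicator {0..} t * exp (- (r * cosh t))) \<partial>lborel)"
    by (rule integral_eq_nn_integral) simp_all
  also have "(\<integral>\<^sup>+ t. ennreal (indicator {0..} t * exp (- (r * cosh t))) \<partial>lborel) = besselK0_ennreal r"
    unfolding besselK0_ennreal_def by (intro nn_integral_cong) (auto simp: indicator_def)
  finally show ?thesis by (simp add: ennreal_enn2real_if)
qed

lemma besselK0_ennreal_antimono: "r \<le> r' \<Longrightarrow> besselK0_ennreal r' \<le> besselK0_ennreal r"
  unfolding besselK0_ennreal_def
  by (intro nn_integral_mono mult_right_mono ennreal_leI) (auto intro: mult_right_mono less_imp_le)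

lemma besselK0_ennreal_le_exp_mult_half:
  assumes "0 \<le> r"
  shows "besselK0_ennreal r \<le> ennreal (exp (- r / 2)) * besselK0_ennreal (r / 2)"
proof -
  have "exp (- (r * cosh t)) \<le> exp (- r / 2) * exp (- (r / 2 * cosh t))" for t
  proof -
    have "r / 2 \<le> r / 2 * cosh t"
      using assms cosh_real_ge_1[of t] by (simp add: mult_le_cancel_left1)
    then show ?thesis by (simp flip: exp_add)
  qed
  then have "besselK0_ennreal r
      \<le> (\<integral>\<^sup>+ t. ennreal (exp (- r / 2)) * (ennreal (exp (- (r / 2 * cosh t))) * indicator {0..} t) \<partial>lborel)"
    unfolding besselK0_ennreal_def
    by (intro nn_integral_mono) (simp add: ennreal_mult'[symmetric] indicator_def ennreal_leI)
  also have "\<dots> = ennreal (exp (- r / 2)) * besselK0_ennreal (r / 2)"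
    unfolding besselK0_ennreal_def by (intro nn_integral_cmult) measurable
  finally show ?thesis .
qed

lemma nn_integral_exp_Ici:
  assumes "0 < c"
  shows "(\<integral>\<^sup>+ t. ennreal (exp (- (c * t))) * indicator {0..} t \<partial>lborel) = ennreal (1 / c)"
proof -
  have "1 = (\<integral>\<^sup>+ t. ennreal (t ^ 0 * exp (- t)) * indicator {0..} t \<partial>lborel)"
    using nn_intergal_power_times_exp_Ici[of 0] by simp
  also have "\<dots> = \<bar>c\<bar> * (\<integral>\<^sup>+ t. ennreal ((0 + c * t) ^ 0 * exp (- (0 + c * t)))
                                     * indicator {0..} (0 + c * t) \<partial>lborel)"
    by (rule nn_integral_real_affine) (use assms in auto)
  also have "(\<integral>\<^sup>+ t. ennreal ((0 + c * t) ^ 0 * exp (- (0 + c * t))) * indicator {0..} (0 + c * t) \<partial>lborel)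
      = (\<integral>\<^sup>+ t. ennreal (exp (- (c * t))) * indicator {0..} t \<partial>lborel)"
    using assms by (intro nn_integral_cong) (auto simp: indicator_def zero_le_mult_iff)
  finally have "1 = ennreal c * (\<integral>\<^sup>+ t. ennreal (exp (- (c * t))) * indicator {0..} t \<partial>lborel)"
    using assms by simp
  moreover have "ennreal (1 / c) * ennreal c = 1"
    using assms by (simp add: ennreal_mult''[symmetric])
  ultimately show ?thesis
    by (metis mult.assoc mult_1 mult.right_neutral)
qed

lemma besselK0_ennreal_le_inverse:
  assumes "0 < r"
  shows "besselK0_ennreal r \<le> ennreal (2 / r)"
proof -
  have "r / 2 * t \<le> r * cosh t" for t
  proof -
    have "t / 2 \<le> cosh t"
      using exp_ge_add_one_self[of t] exp_half_le_cosh[of t] by linarith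
    then show ?thesis
      using assms by (metis mult.commute mult_left_mono less_imp_le times_divide_eq_right)
  qed
  then have "besselK0_ennreal r \<le> (\<integral>\<^sup>+ t. ennreal (exp (- (r / 2 * t))) * indicator {0..} t \<partial>lborel)"
    unfolding besselK0_ennreal_def by (intro nn_integral_mono mult_right_mono ennreal_leI) auto
  also have "\<dots> = ennreal (2 / r)"
    using nn_integral_exp_Ici[of "r / 2"] assms by simp
  finally show ?thesis .
qed

lemma nn_integral_exp_abs_le:
  assumes "0 < c"
  shows "(\<integral>\<^sup>+ s. ennreal (exp (- (c * \<bar>s - u\<bar>))) \<partial>lborel) \<le> ennreal (2 / c)"
proof -
  define h where "h v = ennreal (exp (- (c * v))) * indicator {0..} v" for v :: real
  have [measurable]: "h \<in> borel_measurable borel"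
    unfolding h_def by measurable
  have "(\<integral>\<^sup>+ s. ennreal (exp (- (c * \<bar>s - u\<bar>))) \<partial>lborel) \<le> (\<integral>\<^sup>+ s. h (s - u) + h (u - s) \<partial>lborel)"
    unfolding h_def
    by (intro nn_integral_mono) (auto simp: indicator_def add_increasing2 add_increasing)
  also have "\<dots> = (\<integral>\<^sup>+ s. h (s - u) \<partial>lborel) + (\<integral>\<^sup>+ s. h (u - s) \<partial>lborel)"
    by (rule nn_integral_add) measurable
  also have "\<dots> = ennreal (1 / c) + ennreal (1 / c)"
  proof -
    have "(\<integral>\<^sup>+ s. h (s - u) \<partial>lborel) = (\<integral>\<^sup>+ s. h s \<partial>lborel)"
      using nn_integral_real_affine[of "\<lambda>s. h (s - u)" 1 u] by simp
    moreover have "(\<integral>\<^sup>+ s. h (u - s) \<partial>lborel) = (\<integral>\<^sup>+ s. h s \<partial>lborel)"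
      using nn_integral_real_affine[of "\<lambda>s. h (u - s)" "-1" u] by simp
    ultimately show ?thesis
      unfolding h_def using nn_integral_exp_Ici[OF assms] by simp
  qed
  also have "\<dots> = ennreal (2 / c)"
    using assms by (simp add: ennreal_plus[symmetric] del: ennreal_plus)
  finally show ?thesis .
qed

lemma nn_integral_besselK0_ennreal_le: "(\<integral>\<^sup>+ s. besselK0_ennreal (\<bar>s - u\<bar> / 2) \<partial>lborel) \<le> 8"
proof -
  define F where "F = (\<lambda>(s, t). ennreal (exp (- (\<bar>s - u\<bar> / 2 * cosh t))) * indicator {0..} t)"
  have [measurable]: "F \<in> borel_measurable (lborel \<Otimes>\<^sub>M lborel)"
    unfolding F_def by simp measurable
  have inner: "(\<integral>\<^sup>+ s. F (s, t) \<partial>lborel) \<le> ennreal 8 * (ennreal (exp (- (1 * t))) * indicator {0..} t)"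
    for t :: real
  proof (cases "0 \<le> t")
    case True
    have "(\<integral>\<^sup>+ s. F (s, t) \<partial>lborel) = (\<integral>\<^sup>+ s. ennreal (exp (- (cosh t / 2 * \<bar>s - u\<bar>))) \<partial>lborel)"
      unfolding F_def using True by (intro nn_integral_cong) (auto simp: mult.commute)
    also have "\<dots> \<le> ennreal (2 / (cosh t / 2))"
      by (rule nn_integral_exp_abs_le) simp
    also have "\<dots> \<le> ennreal (8 * exp (- t))"
    proof (rule ennreal_leI)
      have "4 / cosh t \<le> 4 / (exp t / 2)"
        using exp_half_le_cosh[of t] by (intro divide_left_mono) auto
      then show "2 / (cosh t / 2) \<le> 8 * exp (- t)"
        by (simp add: exp_minus field_simps)
    qed
    finally show ?thesis
      using True by (simp add: ennreal_mult')
  qed (simp add: F_def)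
  have "(\<integral>\<^sup>+ s. besselK0_ennreal (\<bar>s - u\<bar> / 2) \<partial>lborel) = (\<integral>\<^sup>+ s. \<integral>\<^sup>+ t. F (s, t) \<partial>lborel \<partial>lborel)"
    unfolding besselK0_ennreal_def F_def by simp
  also have "\<dots> = (\<integral>\<^sup>+ t. \<integral>\<^sup>+ s. F (s, t) \<partial>lborel \<partial>lborel)"
    by (rule lborel_pair.Fubini[symmetric]) measurable
  also have "\<dots> \<le> (\<integral>\<^sup>+ t. ennreal 8 * (ennreal (exp (- (1 * t))) * indicator {0..} t) \<partial>lborel)"
    by (intro nn_integral_mono inner)
  also have "\<dots> = 8"
    using nn_integral_exp_Ici[of 1] by (subst nn_integral_cmult) auto
  finally show ?thesis .
qed

text \<open>Half of \<open>|x - y|\<close> pays for the decay in \<open>y\<^sub>2\<close>, the other half is kept for \<open>y\<^sub>1\<close>.\<close>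
lemma besselK0_ennreal_norm_le:
  fixes x y :: "real \<times> real"
  shows "besselK0_ennreal (norm (x - y))
           \<le> ennreal (exp (- \<bar>snd y - snd x\<bar> / 2)) * besselK0_ennreal (\<bar>fst y - fst x\<bar> / 2)"
proof -
  have "besselK0_ennreal (norm (x - y)) \<le> ennreal (exp (- norm (x - y) / 2)) * besselK0_ennreal (norm (x - y) / 2)"
    by (rule besselK0_ennreal_le_exp_mult_half) simp
  also have "\<dots> \<le> ennreal (exp (- \<bar>snd y - snd x\<bar> / 2)) * besselK0_ennreal (\<bar>fst y - fst x\<bar> / 2)"
    using abs_fst_diff_le_norm[of x y] abs_snd_diff_le_norm[of x y]
    by (intro mult_mono ennreal_leI besselK0_ennreal_antimono) (auto simp: abs_minus_commute)
  finally show ?thesis .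
qed

lemma besselK0_ennreal_norm_le_far:
  fixes x y :: "real \<times> real"
  assumes "4 < \<bar>fst x\<bar>" "\<bar>fst y\<bar> < \<bar>fst x\<bar> / 2"
  shows "besselK0_ennreal (norm (x - y)) \<le> ennreal (2 * exp (- \<bar>fst x\<bar> / 4))"
proof -
  define a where "a = \<bar>fst x\<bar>"
  have a: "4 < a" using assms by (simp add: a_def)
  have "a / 2 \<le> norm (x - y)"
    using abs_fst_diff_le_norm[of x y] assms unfolding a_def by linarith
  then have "besselK0_ennreal (norm (x - y)) \<le> besselK0_ennreal (a / 2)"
    by (rule besselK0_ennreal_antimono)
  also have "\<dots> \<le> ennreal (exp (- (a / 2) / 2)) * besselK0_ennreal (a / 2 / 2)"
    using a by (intro besselK0_ennreal_le_exp_mult_half) simp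
  also have "\<dots> \<le> ennreal (exp (- (a / 2) / 2)) * ennreal (2 / (a / 2 / 2))"
    using a by (intro mult_left_mono besselK0_ennreal_le_inverse) auto
  also have "\<dots> \<le> ennreal (2 * exp (- a / 4))"
    using a by (simp flip: ennreal_mult' add: ennreal_leI field_simps)
  finally show ?thesis by (simp add: a_def)
qed

lemma G_half_le_besselK0: "G_half x y \<le> besselK0 (norm (x - y))"
proof -
  have "G_half x y \<le> besselK0 (norm (x - y)) / (2 * pi)"
    unfolding G_half_def Gfund_def using besselK0_nonneg[of "norm (reflect x - y)"] by simp
  also have "\<dots> \<le> besselK0 (norm (x - y))"
    using besselK0_nonneg[of "norm (x - y)"] pi_gt3 by (simp add: divide_le_eq mult_le_cancel_left1)
  finally show ?thesis .
qed

section \<open>Integrals over the half-plane\<close>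

lemma nn_integral_lborel_product:
  fixes g h :: "real \<Rightarrow> ennreal"
  assumes [measurable]: "g \<in> borel_measurable borel" "h \<in> borel_measurable borel"
  shows "(\<integral>\<^sup>+ y. h (fst y) * g (snd y) \<partial>lborel) = (\<integral>\<^sup>+ s. h s \<partial>lborel) * (\<integral>\<^sup>+ v. g v \<partial>lborel)"
proof -
  have "(\<lambda>y. h (fst y) * g (snd y)) \<in> borel_measurable (lborel \<Otimes>\<^sub>M lborel)"
    by simp measurable
  from lborel_pair.nn_integral_snd[OF this]
  have "(\<integral>\<^sup>+ y. h (fst y) * g (snd y) \<partial>lborel) = (\<integral>\<^sup>+ v. \<integral>\<^sup>+ s. h s * g v \<partial>lborel \<partial>lborel)"
    by (simp add: lborel_prod)
  also have "\<dots> = (\<integral>\<^sup>+ v. (\<integral>\<^sup>+ s. h s \<partial>lborel) * g v \<partial>lborel)"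
    by (intro nn_integral_cong nn_integral_multc) measurable
  also have "\<dots> = (\<integral>\<^sup>+ s. h s \<partial>lborel) * (\<integral>\<^sup>+ v. g v \<partial>lborel)"
    by (rule nn_integral_cmult) measurable
  finally show ?thesis .
qed

definition half_line_integral :: "(real \<times> real \<Rightarrow> real) \<Rightarrow> real \<Rightarrow> ennreal" where
  "half_line_integral q v = (\<integral>\<^sup>+ s. ennreal (q (s, v)) * indicator {0<..} s \<partial>lborel)"

lemma borel_measurable_half_line_integral[measurable]:
  assumes [measurable]: "q \<in> borel_measurable borel"
  shows "half_line_integral q \<in> borel_measurable borel"
proof -
  have [measurable]: "q \<in> borel_measurable (lborel \<Otimes>\<^sub>M lborel)"
    by (simp add: lborel_prod)
  have "(\<lambda>(v, s). ennreal (q (s, v)) * indicator {0<..} s) \<in> borel_measurable (lborel \<Otimes>\<^sub>M lborel)"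
    by measurable
  then have "(\<lambda>v. \<integral>\<^sup>+ s. ennreal (q (s, v)) * indicator {0<..} s \<partial>lborel) \<in> borel_measurable lborel"
    by (rule lborel.borel_measurable_nn_integral)
  then show ?thesis
    unfolding half_line_integral_def[abs_def] by simp
qed

lemma nn_integral_half_line_integral_le:
  assumes [measurable]: "q \<in> borel_measurable borel"
  shows "(\<integral>\<^sup>+ v. indicator {0<..} v * half_line_integral q v \<partial>lborel)
           \<le> (\<integral>\<^sup>+ y. indicator upper_half y * ennreal (q y) \<partial>lborel)"
proof -
  have "(\<integral>\<^sup>+ v. indicator {0<..} v * half_line_integral q v \<partial>lborel)
      = (\<integral>\<^sup>+ v. \<integral>\<^sup>+ s. indicator {0<..} v * (ennreal (q (s, v)) * indicator {0<..} s) \<partial>lborel \<partial>lborel)"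
    unfolding half_line_integral_def
    by (intro nn_integral_cong nn_integral_cmult[symmetric]) measurable
  also have "\<dots> = (\<integral>\<^sup>+ y. indicator {0<..} (snd y) * (ennreal (q y) * indicator {0<..} (fst y)) \<partial>lborel)"
  proof -
    have [measurable]: "q \<in> borel_measurable (lborel \<Otimes>\<^sub>M lborel)"
      by (simp add: lborel_prod)
    have "(\<lambda>y. indicator {0<..} (snd y) * (ennreal (q y) * indicator {0<..} (fst y)))
        \<in> borel_measurable (lborel \<Otimes>\<^sub>M lborel)"
      by measurable
    from lborel_pair.nn_integral_snd[OF this] show ?thesis
      by (simp add: lborel_prod)
  qed
  also have "\<dots> \<le> (\<integral>\<^sup>+ y. indicator upper_half y * ennreal (q y) \<partial>lborel)"
    by (intro nn_integral_mono) (auto simp: indicator_def upper_half_def)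
  finally show ?thesis .
qed

lemma nn_integral_eq_set_lebesgue_integral:
  assumes "set_integrable M A f" "\<And>y. y \<in> A \<Longrightarrow> 0 \<le> f y"
  shows "(\<integral>\<^sup>+ y. indicator A y * ennreal (f y) \<partial>M) = ennreal (LINT y:A|M. f y)"
proof -
  have "(\<integral>\<^sup>+ y. indicator A y * ennreal (f y) \<partial>M) = (\<integral>\<^sup>+ y. ennreal (indicator A y *\<^sub>R f y) \<partial>M)"
    by (intro nn_integral_cong) (auto simp: indicator_def)
  also have "\<dots> = ennreal (LINT y:A|M. f y)"
    using assms unfolding set_integrable_def set_lebesgue_integral_def
    by (intro nn_integral_eq_integral) (auto simp: indicator_def)
  finally show ?thesis .
qed

lemma ennreal_mult_le_amgm:
  fixes a b lam :: real
  assumes "0 \<le> a" "0 \<le> b" "0 < lam"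
  shows "ennreal (a * b) \<le> ennreal (lam / 2) * ennreal (a\<^sup>2) + ennreal (1 / (2 * lam)) * ennreal (b\<^sup>2)"
proof -
  have "0 \<le> (lam * a - b)\<^sup>2" by simp
  then have "a * b \<le> lam / 2 * a\<^sup>2 + 1 / (2 * lam) * b\<^sup>2"
    using assms by (simp add: field_simps power2_eq_square)
  then have "ennreal (a * b) \<le> ennreal (lam / 2 * a\<^sup>2 + 1 / (2 * lam) * b\<^sup>2)"
    by (rule ennreal_leI)
  also have "\<dots> = ennreal (lam / 2 * a\<^sup>2) + ennreal (1 / (2 * lam) * b\<^sup>2)"
    using assms by (intro ennreal_plus) auto
  finally show ?thesis
    using assms by (simp add: ennreal_mult[symmetric])
qed

lemma optimize_lambda_bound:
  fixes a I n :: real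
  assumes "0 < a" "0 \<le> I" "\<And>lam. 0 < lam \<Longrightarrow> n \<le> 8 * lam / a * I + 8 / lam"
  shows "n \<le> 16 * sqrt I / sqrt a"
proof (cases "I = 0")
  case True
  show ?thesis
  proof (rule ccontr)
    assume "\<not> ?thesis"
    then have "0 < n" using True by simp
    then have "n \<le> n / 2" using assms(3)[of "16 / n"] True by simp
    then show False using \<open>0 < n\<close> by simp
  qed
next
  case False
  define q r where "q = sqrt I" and "r = sqrt a"
  have q: "0 < q" "I = q * q" and r: "0 < r" "a = r * r"
    using False assms by (simp_all add: q_def r_def)
  have "n \<le> 8 * (r / q) / a * I + 8 / (r / q)"
    using q r by (intro assms(3)) simp
  also have "\<dots> = 16 * q / r"
    using q r by (simp add: field_simps)
  finally show ?thesis
    by (simp add: q_def r_def)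
qed

lemma interpolation_bound:
  fixes a N I n :: real
  assumes "1 \<le> a" "0 \<le> N" "0 \<le> I" "0 \<le> n" "n \<le> 16 * N / a" "n \<le> 16 * sqrt I / sqrt a"
  shows "n \<le> 16 * (a powr (-3/8) * sqrt N * sqrt (sqrt I))"
proof -
  have "a powr (3/2) = a powr 1 * a powr (1/2)"
    by (simp only: powr_add[symmetric]) simp
  then have "1 / (a * sqrt a) = a powr (-3/2)"
    using assms by (simp add: powr_half_sqrt powr_minus_divide)
  then have sqrt_eq: "sqrt (1 / (a * sqrt a)) = a powr (-3/4)"
    using assms by (simp add: powr_half_sqrt[symmetric] powr_powr)
  have "n = sqrt (n * n)" using assms(4) by simp
  also have "\<dots> \<le> sqrt ((16 * N / a) * (16 * sqrt I / sqrt a))"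
    using assms by (intro real_sqrt_le_mono mult_mono) auto
  also have "\<dots> = 16 * sqrt N * sqrt (sqrt I) * sqrt (1 / (a * sqrt a))"
    using assms by (simp add: real_sqrt_mult real_sqrt_divide)
  also have "\<dots> \<le> 16 * sqrt N * sqrt (sqrt I) * a powr (-3/8)"
    unfolding sqrt_eq using assms by (intro mult_left_mono powr_mono) auto
  finally show ?thesis by (simp add: mult_ac)
qed

lemma exp_minus_quarter_le_exp_minus_sqrt_half:
  assumes "4 \<le> a"
  shows "exp (- a / 4) \<le> exp (- sqrt a / 2)"
proof -
  have "2 * sqrt a \<le> sqrt a * sqrt a"
    using assms by (intro mult_right_mono) (auto simp: real_le_rsqrt)
  then show ?thesis
    using assms by simp
qed

section \<open>Steiner symmetric densities\<close>

lemma symmetric_decreasing_le_nn_integral: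
  fixes f :: "real \<Rightarrow> real"
  assumes "0 < c" "c \<le> \<bar>s0\<bar>" "\<And>s. f (- s) = f s" "\<And>s s'. 0 < s \<Longrightarrow> s \<le> s' \<Longrightarrow> f s' \<le> f s"
  shows "ennreal (f s0) \<le> ennreal (1 / c) * (\<integral>\<^sup>+ s. ennreal (f s) * indicator {0<..} s \<partial>lborel)"
proof -
  have "f s0 = f \<bar>s0\<bar>"
    using assms(3)[of s0] by (cases "0 \<le> s0") auto
  then have below: "f s0 \<le> f s" if "0 < s" "s \<le> c" for s
    using assms(2,4) that by (metis order_trans)
  have "ennreal c * ennreal (f s0) = (\<integral>\<^sup>+ s. ennreal (f s0) * indicator {0<..c} s \<partial>lborel)"
    using assms(1) by (simp add: nn_integral_cmult_indicator mult.commute)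
  also have "\<dots> \<le> (\<integral>\<^sup>+ s. ennreal (f s) * indicator {0<..} s \<partial>lborel)"
    using below by (intro nn_integral_mono) (auto simp: indicator_def ennreal_leI)
  finally have "ennreal (1 / c) * (ennreal c * ennreal (f s0))
      \<le> ennreal (1 / c) * (\<integral>\<^sup>+ s. ennreal (f s) * indicator {0<..} s \<partial>lborel)"
    by (rule mult_left_mono) simp
  then show ?thesis
    using assms(1) by (simp add: mult.assoc[symmetric] flip: ennreal_mult)
qed

definition near_part :: "(real \<times> real \<Rightarrow> real) \<Rightarrow> real \<times> real \<Rightarrow> ennreal" where
  "near_part w x = (\<integral>\<^sup>+ y. indicator (upper_half \<inter> {y. \<bar>fst x\<bar> / 2 \<le> \<bar>fst y\<bar>}) y * ennreal (w y)
                             * besselK0_ennreal (norm (x - y)) \<partial>lborel)"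

locale steiner_symmetric =
  fixes w :: "real \<times> real \<Rightarrow> real"
  assumes measurable[measurable]: "w \<in> borel_measurable borel"
    and nonneg: "0 < v \<Longrightarrow> 0 \<le> w (s, v)"
    and symmetric: "0 < v \<Longrightarrow> w (- s, v) = w (s, v)"
    and decreasing: "0 < v \<Longrightarrow> 0 < s \<Longrightarrow> s \<le> s' \<Longrightarrow> w (s', v) \<le> w (s, v)"
begin

lemma le_half_line_integral:
  assumes "y \<in> upper_half" "0 < c" "c \<le> \<bar>fst y\<bar>"
  shows "ennreal (w y) \<le> ennreal (1 / c) * half_line_integral w (snd y)"
proof -
  have "ennreal (w (fst y, snd y)) \<le> ennreal (1 / c) * half_line_integral w (snd y)"
    unfolding half_line_integral_def using assms symmetric decreasing
    by (intro symmetric_decreasing_le_nn_integral) (auto simp: upper_half_def)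
  then show ?thesis by simp
qed

lemma square_le_half_line_integral:
  assumes "y \<in> upper_half" "0 < c" "c \<le> \<bar>fst y\<bar>"
  shows "ennreal ((w y)\<^sup>2) \<le> ennreal (1 / c) * half_line_integral (\<lambda>y. (w y)\<^sup>2) (snd y)"
proof -
  have "ennreal ((w (fst y, snd y))\<^sup>2) \<le> ennreal (1 / c) * half_line_integral (\<lambda>y. (w y)\<^sup>2) (snd y)"
    unfolding half_line_integral_def using assms symmetric decreasing nonneg
    by (intro symmetric_decreasing_le_nn_integral) (auto simp: upper_half_def intro: power_mono)
  then show ?thesis by simp
qed

lemma near_integrand_le_L1:
  assumes "y \<in> upper_half" "0 < c" "c \<le> \<bar>fst y\<bar>"
  shows "ennreal (w y) * besselK0_ennreal (norm (x - y))
           \<le> ennreal (1 / c) * (besselK0_ennreal (\<bar>fst y - fst x\<bar> / 2) * half_line_integral w (snd y))"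
proof -
  have "besselK0_ennreal (norm (x - y))
      \<le> ennreal (exp (- \<bar>snd y - snd x\<bar> / 2)) * besselK0_ennreal (\<bar>fst y - fst x\<bar> / 2)"
    by (rule besselK0_ennreal_norm_le)
  also have "\<dots> \<le> 1 * besselK0_ennreal (\<bar>fst y - fst x\<bar> / 2)"
    by (intro mult_right_mono) auto
  finally have "ennreal (w y) * besselK0_ennreal (norm (x - y))
      \<le> ennreal (1 / c) * half_line_integral w (snd y) * besselK0_ennreal (\<bar>fst y - fst x\<bar> / 2)"
    using le_half_line_integral[OF assms] by (intro mult_mono) auto
  then show ?thesis
    by (simp add: mult_ac)
qed

lemma near_integrand_le_L2:
  assumes "y \<in> upper_half" "0 < c" "c \<le> \<bar>fst y\<bar>" "0 < lam"
  shows "ennreal (w y) * besselK0_ennreal (norm (x - y))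
           \<le> ennreal (lam / (2 * c)) * (besselK0_ennreal (\<bar>fst y - fst x\<bar> / 2) * half_line_integral (\<lambda>y. (w y)\<^sup>2) (snd y))
             + ennreal (1 / (2 * lam)) * (besselK0_ennreal (\<bar>fst y - fst x\<bar> / 2) * ennreal (exp (- \<bar>snd y - snd x\<bar>)))"
proof -
  define k where "k = besselK0_ennreal (\<bar>fst y - fst x\<bar> / 2)"
  define e where "e = exp (- \<bar>snd y - snd x\<bar> / 2)"
  have W: "0 \<le> w y"
    using assms(1) nonneg[of "snd y" "fst y"] by (simp add: upper_half_def)
  have "ennreal (w y) * besselK0_ennreal (norm (x - y)) \<le> ennreal (w y) * (ennreal e * k)"
    unfolding e_def k_def by (intro mult_left_mono besselK0_ennreal_norm_le) simp
  also have "\<dots> = ennreal (w y * e) * k"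
    using W by (simp add: ennreal_mult mult.assoc e_def)
  also have "\<dots> \<le> (ennreal (lam / 2) * ennreal ((w y)\<^sup>2) + ennreal (1 / (2 * lam)) * ennreal (e\<^sup>2)) * k"
    using W assms(4) by (intro mult_right_mono ennreal_mult_le_amgm) (auto simp: e_def)
  also have "\<dots> \<le> (ennreal (lam / 2) * (ennreal (1 / c) * half_line_integral (\<lambda>y. (w y)\<^sup>2) (snd y))
      + ennreal (1 / (2 * lam)) * ennreal (exp (- \<bar>snd y - snd x\<bar>))) * k"
    using square_le_half_line_integral[OF assms(1-3)]
    by (intro mult_right_mono add_mono mult_left_mono) (auto simp: e_def power2_eq_square simp flip: exp_add)
  also have "ennreal (lam / 2) * (ennreal (1 / c) * half_line_integral (\<lambda>y. (w y)\<^sup>2) (snd y))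
      = ennreal (lam / (2 * c)) * half_line_integral (\<lambda>y. (w y)\<^sup>2) (snd y)"
    using assms by (simp add: mult.assoc[symmetric] ennreal_mult[symmetric])
  finally show ?thesis
    by (simp add: k_def ring_distribs mult_ac)
qed

lemma near_part_le_L1:
  assumes "0 < \<bar>fst x\<bar>"
  shows "near_part w x \<le> ennreal (16 / \<bar>fst x\<bar>) * (\<integral>\<^sup>+ y. indicator upper_half y * ennreal (w y) \<partial>lborel)"
proof -
  define a where "a = \<bar>fst x\<bar>"
  have a: "0 < a" using assms by (simp add: a_def)
  define k where "k s = besselK0_ennreal (\<bar>s - fst x\<bar> / 2)" for s
  define H where "H v = indicator {0<..} v * half_line_integral w v" for v
  have [measurable]: "k \<in> borel_measurable borel" "H \<in> borel_measurable borel"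
    unfolding k_def[abs_def] H_def[abs_def] by measurable
  have pointwise: "indicator (upper_half \<inter> {y. a / 2 \<le> \<bar>fst y\<bar>}) y * ennreal (w y) * besselK0_ennreal (norm (x - y))
      \<le> ennreal (2 / a) * (k (fst y) * H (snd y))" for y
  proof (cases "y \<in> upper_half \<and> a / 2 \<le> \<bar>fst y\<bar>")
    case True
    then have "0 < snd y" by (simp add: upper_half_def)
    with True near_integrand_le_L1[of y "a / 2" x] a show ?thesis
      by (simp add: k_def H_def)
  qed simp
  have "near_part w x \<le> (\<integral>\<^sup>+ y. ennreal (2 / a) * (k (fst y) * H (snd y)) \<partial>lborel)"
    unfolding near_part_def a_def[symmetric] by (intro nn_integral_mono pointwise)
  also have "\<dots> = ennreal (2 / a) * ((\<integral>\<^sup>+ s. k s \<partial>lborel) * (\<integral>\<^sup>+ v. H v \<partial>lborel))"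
    by (subst nn_integral_cmult) (simp_all add: nn_integral_lborel_product)
  also have "\<dots> \<le> ennreal (2 / a) * (8 * (\<integral>\<^sup>+ y. indicator upper_half y * ennreal (w y) \<partial>lborel))"
    unfolding k_def H_def
    by (intro mult_left_mono mult_mono nn_integral_besselK0_ennreal_le nn_integral_half_line_integral_le) auto
  also have "\<dots> = ennreal (16 / a) * (\<integral>\<^sup>+ y. indicator upper_half y * ennreal (w y) \<partial>lborel)"
    using a ennreal_mult'[of "2 / a" 8] by (simp add: mult.assoc[symmetric])
  finally show ?thesis
    by (simp only: a_def)
qed

lemma near_part_le_L2:
  assumes "0 < \<bar>fst x\<bar>" "0 < lam"
  shows "near_part w x \<le> ennreal (8 * lam / \<bar>fst x\<bar>) * (\<integral>\<^sup>+ y. indicator upper_half y * ennreal ((w y)\<^sup>2) \<partial>lborel)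
                         + ennreal (8 / lam)"
proof -
  define a where "a = \<bar>fst x\<bar>"
  have a: "0 < a" using assms by (simp add: a_def)
  define k where "k s = besselK0_ennreal (\<bar>s - fst x\<bar> / 2)" for s
  define H where "H v = indicator {0<..} v * half_line_integral (\<lambda>y. (w y)\<^sup>2) v" for v
  define E where "E v = ennreal (exp (- \<bar>v - snd x\<bar>))" for v
  have [measurable]: "k \<in> borel_measurable borel" "H \<in> borel_measurable borel" "E \<in> borel_measurable borel"
    unfolding k_def[abs_def] H_def[abs_def] E_def[abs_def] by measurable
  have pointwise: "indicator (upper_half \<inter> {y. a / 2 \<le> \<bar>fst y\<bar>}) y * ennreal (w y) * besselK0_ennreal (norm (x - y))
      \<le> ennreal (lam / a) * (k (fst y) * H (snd y)) + ennreal (1 / (2 * lam)) * (k (fst y) * E (snd y))" for y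
  proof (cases "y \<in> upper_half \<and> a / 2 \<le> \<bar>fst y\<bar>")
    case True
    then have "0 < snd y" by (simp add: upper_half_def)
    with True near_integrand_le_L2[of y "a / 2" lam x] a assms(2) show ?thesis
      by (simp add: k_def H_def E_def)
  qed simp
  have "near_part w x \<le> (\<integral>\<^sup>+ y. ennreal (lam / a) * (k (fst y) * H (snd y))
                              + ennreal (1 / (2 * lam)) * (k (fst y) * E (snd y)) \<partial>lborel)"
    unfolding near_part_def a_def[symmetric] by (intro nn_integral_mono pointwise)
  also have "\<dots> = ennreal (lam / a) * ((\<integral>\<^sup>+ s. k s \<partial>lborel) * (\<integral>\<^sup>+ v. H v \<partial>lborel))
      + ennreal (1 / (2 * lam)) * ((\<integral>\<^sup>+ s. k s \<partial>lborel) * (\<integral>\<^sup>+ v. E v \<partial>lborel))"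
    by (subst nn_integral_add) (simp_all add: nn_integral_cmult nn_integral_lborel_product)
  also have "\<dots> \<le> ennreal (lam / a) * (8 * (\<integral>\<^sup>+ y. indicator upper_half y * ennreal ((w y)\<^sup>2) \<partial>lborel))
      + ennreal (1 / (2 * lam)) * (8 * 2)"
  proof -
    have "(\<integral>\<^sup>+ v. E v \<partial>lborel) \<le> 2"
      unfolding E_def using nn_integral_exp_abs_le[of 1 "snd x"] by simp
    then show ?thesis
      unfolding k_def H_def
      by (intro add_mono mult_left_mono mult_mono nn_integral_besselK0_ennreal_le
          nn_integral_half_line_integral_le) auto
  qed
  also have "\<dots> = ennreal (8 * lam / a) * (\<integral>\<^sup>+ y. indicator upper_half y * ennreal ((w y)\<^sup>2) \<partial>lborel)
      + ennreal (8 / lam)"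
    using a assms(2) ennreal_mult'[of "lam / a" 8] ennreal_mult'[of "1 / (2 * lam)" 16]
    by (simp add: mult.assoc[symmetric] mult.commute[of 8 lam])
  finally show ?thesis
    by (simp only: a_def)
qed

lemma nn_integral_G_half_le:
  assumes "4 < \<bar>fst x\<bar>"
  shows "(\<integral>\<^sup>+ y. ennreal (indicator upper_half y *\<^sub>R (G_half x y * w y)) \<partial>lborel)
           \<le> ennreal (2 * exp (- \<bar>fst x\<bar> / 4)) * (\<integral>\<^sup>+ y. indicator upper_half y * ennreal (w y) \<partial>lborel)
             + near_part w x"
proof -
  define a where "a = \<bar>fst x\<bar>"
  have pointwise: "ennreal (indicator upper_half y *\<^sub>R (G_half x y * w y))
      \<le> ennreal (2 * exp (- a / 4)) * (indicator upper_half y * ennreal (w y))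
        + indicator (upper_half \<inter> {y. a / 2 \<le> \<bar>fst y\<bar>}) y * ennreal (w y) * besselK0_ennreal (norm (x - y))"
    for y
  proof (cases "y \<in> upper_half")
    case True
    have W: "0 \<le> w y" using True nonneg[of "snd y" "fst y"] by (simp add: upper_half_def)
    have "ennreal (indicator upper_half y *\<^sub>R (G_half x y * w y)) \<le> ennreal (besselK0 (norm (x - y)) * w y)"
      using True W G_half_le_besselK0[of x y] by (intro ennreal_leI) (simp add: mult_right_mono)
    also have "\<dots> \<le> besselK0_ennreal (norm (x - y)) * ennreal (w y)"
      using W besselK0_nonneg besselK0_le_besselK0_ennreal by (simp add: ennreal_mult mult_right_mono)
    also have "\<dots> \<le> ennreal (2 * exp (- a / 4)) * (indicator upper_half y * ennreal (w y))
        + indicator (upper_half \<inter> {y. a / 2 \<le> \<bar>fst y\<bar>}) y * ennreal (w y) * besselK0_ennreal (norm (x - y))"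
    proof (cases "a / 2 \<le> \<bar>fst y\<bar>")
      case False
      then have "besselK0_ennreal (norm (x - y)) \<le> ennreal (2 * exp (- a / 4))"
        using assms besselK0_ennreal_norm_le_far[of x y] by (simp add: a_def)
      then show ?thesis
        using True by (simp add: add_increasing2 mult_right_mono)
    qed (use True in \<open>simp add: mult.commute add_increasing\<close>)
    finally show ?thesis .
  qed simp
  have "(\<integral>\<^sup>+ y. ennreal (indicator upper_half y *\<^sub>R (G_half x y * w y)) \<partial>lborel)
      \<le> (\<integral>\<^sup>+ y. ennreal (2 * exp (- a / 4)) * (indicator upper_half y * ennreal (w y))
        + indicator (upper_half \<inter> {y. a / 2 \<le> \<bar>fst y\<bar>}) y * ennreal (w y) * besselK0_ennreal (norm (x - y)) \<partial>lborel)"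
    by (intro nn_integral_mono pointwise)
  also have "\<dots> = ennreal (2 * exp (- a / 4)) * (\<integral>\<^sup>+ y. indicator upper_half y * ennreal (w y) \<partial>lborel)
      + near_part w x"
    unfolding near_part_def a_def by (subst nn_integral_add) (simp_all add: nn_integral_cmult)
  finally show ?thesis
    by (simp only: a_def)
qed

lemma near_part_le_interpolation:
  assumes "1 \<le> \<bar>fst x\<bar>" "0 \<le> N" "0 \<le> I"
    and N: "(\<integral>\<^sup>+ y. indicator upper_half y * ennreal (w y) \<partial>lborel) = ennreal N"
    and I: "(\<integral>\<^sup>+ y. indicator upper_half y * ennreal ((w y)\<^sup>2) \<partial>lborel) = ennreal I"
  shows "near_part w x \<le> ennreal (16 * (\<bar>fst x\<bar> powr (-3/8) * sqrt N * sqrt (sqrt I)))"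
proof -
  define a where "a = \<bar>fst x\<bar>"
  have a: "1 \<le> a" using assms by (simp add: a_def)
  have L1: "near_part w x \<le> ennreal (16 * N / a)"
    using near_part_le_L1[of x] a assms(2) unfolding N a_def[symmetric]
    by (simp add: ennreal_mult[symmetric])
  then have "near_part w x \<noteq> top"
    by (auto simp: top_unique)
  then obtain n where n: "near_part w x = ennreal n" "0 \<le> n"
    by (cases "near_part w x") auto
  have "n \<le> 8 * lam / a * I + 8 / lam" if "0 < lam" for lam
  proof -
    have "ennreal n \<le> ennreal (8 * lam / a) * ennreal I + ennreal (8 / lam)"
      using near_part_le_L2[of x lam] that a unfolding I n a_def[symmetric] by simp
    also have "\<dots> = ennreal (8 * lam / a * I + 8 / lam)"
      using that a assms(3) by (simp add: ennreal_mult[symmetric])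
    finally show ?thesis
      by (rule ennreal_le_iff[THEN iffD1, rotated]) (use that a assms(3) in simp)
  qed
  then have "n \<le> 16 * sqrt I / sqrt a"
    using a assms(3) by (intro optimize_lambda_bound) auto
  then have "n \<le> 16 * (a powr (-3/8) * sqrt N * sqrt (sqrt I))"
    using L1 a assms(2,3) n by (intro interpolation_bound) auto
  then show ?thesis
    unfolding n(1) a_def by (rule ennreal_leI)
qed

lemma nn_integral_eq_Lnorm1:
  assumes "set_integrable lborel upper_half w"
  shows "(\<integral>\<^sup>+ y. indicator upper_half y * ennreal (w y) \<partial>lborel) = ennreal (Lnorm1 w)"
proof -
  have "(\<integral>\<^sup>+ y. indicator upper_half y * ennreal (w y) \<partial>lborel)
      = (\<integral>\<^sup>+ y. indicator upper_half y * ennreal \<bar>w y\<bar> \<partial>lborel)"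
    using nonneg by (intro nn_integral_cong) (auto simp: indicator_def upper_half_def)
  then show ?thesis
    unfolding Lnorm1_def
    using nn_integral_eq_set_lebesgue_integral[OF set_integrable_abs[OF assms]] by simp
qed

lemma G_op_le:
  assumes "set_integrable lborel upper_half w" "set_integrable lborel upper_half (\<lambda>y. (w y)\<^sup>2)"
    and "4 < \<bar>fst x\<bar>"
  shows "G_op w x \<le> 16 * (\<bar>fst x\<bar> powr (-3/8) * sqrt (Lnorm1 w) * sqrt (Lnorm2 w)
                          + exp (- sqrt \<bar>fst x\<bar> / 2) * Lnorm1 w)"
proof -
  define a N I where "a = \<bar>fst x\<bar>" and "N = Lnorm1 w" and "I = (LINT y:upper_half|lborel. (w y)\<^sup>2)"
  define near where "near = 16 * (a powr (-3/8) * sqrt N * sqrt (sqrt I))"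
  have a: "4 < a" using assms(3) by (simp add: a_def)
  have "0 \<le> N" "0 \<le> I"
    unfolding N_def I_def Lnorm1_def set_lebesgue_integral_def
    by (intro integral_nonneg_AE; simp)+
  then have "0 \<le> near"
    by (simp add: near_def)
  have I: "(\<integral>\<^sup>+ y. indicator upper_half y * ennreal ((w y)\<^sup>2) \<partial>lborel) = ennreal I"
    unfolding I_def using nn_integral_eq_set_lebesgue_integral[OF assms(2)] by simp
  have "(\<integral>\<^sup>+ y. ennreal (indicator upper_half y *\<^sub>R (G_half x y * w y)) \<partial>lborel)
      \<le> ennreal (2 * exp (- a / 4)) * ennreal N + ennreal near"
    using nn_integral_G_half_le[OF assms(3)] near_part_le_interpolation[of x N I] a \<open>0 \<le> N\<close> \<open>0 \<le> I\<close>
    unfolding nn_integral_eq_Lnorm1[OF assms(1)] I N_def a_def near_def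
    by (auto intro: order_trans add_left_mono)
  also have "\<dots> = ennreal (2 * exp (- a / 4) * N + near)"
    using \<open>0 \<le> N\<close> \<open>0 \<le> near\<close> by (simp add: ennreal_mult[symmetric])
  finally have "G_op w x \<le> 2 * exp (- a / 4) * N + near"
    unfolding G_op_def set_lebesgue_integral_def
    by (rule integral_real_bounded[rotated]) (use \<open>0 \<le> N\<close> \<open>0 \<le> near\<close> in simp)
  also have "\<dots> \<le> 16 * exp (- sqrt a / 2) * N + near"
    using exp_minus_quarter_le_exp_minus_sqrt_half[of a] a \<open>0 \<le> N\<close>
    by (intro add_right_mono mult_right_mono mult_mono) auto
  finally show ?thesis
    by (simp add: near_def a_def N_def I_def Lnorm2_def algebra_simps)
qed

end

theorem lemma3p4:
  shows "\<exists>C>0. \<forall>\<omega> :: real \<times> real \<Rightarrow> real.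
    (\<omega> \<in> borel_measurable lborel \<and>
     set_integrable lborel upper_half \<omega> \<and>
     set_integrable lborel upper_half (\<lambda>y. (\<omega> y)\<^sup>2) \<and>
     (\<forall>y\<in>upper_half. \<omega> y \<ge> 0) \<and>
     (\<forall>a b. b > 0 \<longrightarrow> \<omega> (a, b) = \<omega> (- a, b)) \<and>
     (\<forall>a a' b. b > 0 \<longrightarrow> 0 < a \<longrightarrow> a \<le> a' \<longrightarrow> \<omega> (a', b) \<le> \<omega> (a, b)))
    \<longrightarrow> (\<forall>x\<in>upper_half. \<bar>fst x\<bar> > 4 \<longrightarrow>
          G_op \<omega> x \<le> C * (\<bar>fst x\<bar> powr (-3/8) * sqrt (Lnorm1 \<omega>) * sqrt (Lnorm2 \<omega>)
                          + exp (- sqrt \<bar>fst x\<bar> / 2) * Lnorm1 \<omega>))"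
proof (intro exI[of _ 16] conjI allI impI ballI; (elim conjE)?)
  fix \<omega> :: "real \<times> real \<Rightarrow> real" and x :: "real \<times> real"
  assume meas: "\<omega> \<in> borel_measurable lborel"
    and nonneg: "\<forall>y\<in>upper_half. \<omega> y \<ge> 0"
    and symm: "\<forall>a b. b > 0 \<longrightarrow> \<omega> (a, b) = \<omega> (- a, b)"
    and decr: "\<forall>a a' b. b > 0 \<longrightarrow> 0 < a \<longrightarrow> a \<le> a' \<longrightarrow> \<omega> (a', b) \<le> \<omega> (a, b)"
    and integrable: "set_integrable lborel upper_half \<omega>" "set_integrable lborel upper_half (\<lambda>y. (\<omega> y)\<^sup>2)"
    and x: "\<bar>fst x\<bar> > 4"
  have "steiner_symmetric \<omega>"
  proof
    show "\<omega> \<in> borel_measurable borel" using meas by simp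
    show "0 \<le> \<omega> (s, v)" if "0 < v" for s v using nonneg that by (simp add: upper_half_def)
    show "\<omega> (- s, v) = \<omega> (s, v)" if "0 < v" for s v using symm[rule_format, of v s] that by simp
    show "\<omega> (s', v) \<le> \<omega> (s, v)" if "0 < v" "0 < s" "s \<le> s'" for v s s' using decr that by simp
  qed
  from this integrable x show "G_op \<omega> x \<le> 16 * (\<bar>fst x\<bar> powr (-3/8) * sqrt (Lnorm1 \<omega>) * sqrt (Lnorm2 \<omega>)
                          + exp (- sqrt \<bar>fst x\<bar> / 2) * Lnorm1 \<omega>)"
    by (rule steiner_symmetric.G_op_le)
qed simp

end
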